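(* In the standing setting below, every alternative $c$-convex function $\phi:\mathbb{X}\to\mathbb{R}$ is Lipschitz with Lipschitz constant $\|c\|_{\mathrm{Lip}}$.
   Context: Standing setting: $\mathbb{X},\mathbb{Y}\subset\mathbb{R}^n$ are compact with non-empty interior; $c:\mathbb{X}\times\mathbb{Y}\to\mathbb{R}$ has continuous $D_xc$, $D_yc$, and continuous mixed second derivatives with $D^2_{xy}c=(D^2_{yx}c)^T$; for each $x$ the map $y\mapsto -D_xc(x,y)$ is injective on $\mathbb{Y}$ and for each $y$ the map $x\mapsto -D_yc(x,y)$ is injective on $\mathbb{X}$; $D^2_{xy}c(x,y)$ is invertible everywhere; for every $y$ the set $\{-D_yc(x,y):x\in\mathbb{X}\}$ is convex and for every $x$ the set $\{-D_xc(x,y):y\in\mathbb{Y}\}$ is convex. $\|c\|_{\mathrm{Lip}}=\sup_{(x_1,y_1)\ne(x_0,y_0)}\frac{|c(x_1,y_1)-c(x_0,y_0)|}{(\|x_1-x_0\|^2+\|y_1-y_0\|^2)^{1/2}}$. $c$-chord: for $X_i=(x_i,u_i)\in\mathbb{X}\times\mathbb{R}$, $F_{X_0X_1}(x)=\sup\{-c(x,y)+h: y\in\mathbb{Y},h\in\mathbb{R},-c(x_i,y)+h\le u_i, i=0,1\}$. $\phi:\mathbb{X}\to\mathbb{R}$ is alternative $c$-convex if for all $x_0,x_1\in\mathbb{X}$, with $X_i=(x_i,\phi(x_i))$, $\phi(x)\le F_{X_0X_1}(x)$ for all $x\in\mathbb{X}$. *)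

theory Defs
  imports "HOL-Analysis.Analysis" "HOL-Library.Extended_Real"
begin

definition c_chord ::
  "('a \<Rightarrow> 'b \<Rightarrow> real) \<Rightarrow> 'b set \<Rightarrow> 'a \<times> real \<Rightarrow> 'a \<times> real \<Rightarrow> 'a \<Rightarrow> real" where
  "c_chord c Y X0 X1 x =
     Sup {- c x y + h | y h. y \<in> Y \<and> - c (fst X0) y + h \<le> snd X0 \<and> - c (fst X1) y + h \<le> snd X1}"

definition alt_c_convex ::
  "('a \<Rightarrow> 'b \<Rightarrow> real) \<Rightarrow> 'a set \<Rightarrow> 'b set \<Rightarrow> ('a \<Rightarrow> real) \<Rightarrow> bool" where
  "alt_c_convex c X Y \<phi> \<longleftrightarrow>
     (\<forall>x0\<in>X. \<forall>x1\<in>X. \<forall>x\<in>X. \<phi> x \<le> c_chord c Y (x0, \<phi> x0) (x1, \<phi> x1) x)"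

definition c_lip ::
  "('a::real_normed_vector \<Rightarrow> 'b::real_normed_vector \<Rightarrow> real) \<Rightarrow> 'a set \<Rightarrow> 'b set \<Rightarrow> ereal" where
  "c_lip c X Y =
     (SUP p \<in> {((x1, y1), (x0, y0)) | x1 y1 x0 y0.
                 x1 \<in> X \<and> y1 \<in> Y \<and> x0 \<in> X \<and> y0 \<in> Y \<and> (x1, y1) \<noteq> (x0, y0)}.
        ereal (\<bar>c (fst (fst p)) (snd (fst p)) - c (fst (snd p)) (snd (snd p))\<bar> /
               sqrt ((norm (fst (fst p) - fst (snd p)))\<^sup>2 + (norm (snd (fst p) - snd (snd p)))\<^sup>2)))"

end

theory Submission
  imports Defs
begin

text \<open>Taking both endpoints of the c-chord at the same point (x0, \<phi> x0) shows that \<phi> lies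
  below the c-affine majorant \<phi> x0 + sup_y (c x0 y - c x y) of \<phi> at x0. The increments
  c x0 y - c x1 y are bounded by the Lipschitz norm of c times norm (x1 - x0), and exchanging
  x0 and x1 gives the bound on the absolute value.\<close>

lemma c_lip_ge_diff_quotient:
  fixes c :: "'a::real_normed_vector \<Rightarrow> 'b::real_normed_vector \<Rightarrow> real"
  assumes "x0 \<in> X" "x1 \<in> X" "y \<in> Y" "x0 \<noteq> x1"
  shows "ereal (\<bar>c x1 y - c x0 y\<bar> / norm (x1 - x0)) \<le> c_lip c X Y"
proof -
  have "ereal (\<bar>c x1 y - c x0 y\<bar> / sqrt ((norm (x1 - x0))\<^sup>2 + (norm (y - y))\<^sup>2)) \<le> c_lip c X Y"
    unfolding c_lip_def
    by (rule SUP_upper2[where i="((x1, y), (x0, y))"]) (use assms in auto)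
  then show ?thesis by simp
qed

lemma c_lip_abs_diff_le:
  fixes c :: "'a::real_normed_vector \<Rightarrow> 'b::real_normed_vector \<Rightarrow> real"
  assumes L: "c_lip c X Y = ereal L" and "x0 \<in> X" "x1 \<in> X" "y \<in> Y"
  shows "\<bar>c x1 y - c x0 y\<bar> \<le> L * norm (x1 - x0)"
proof (cases "x0 = x1")
  case True
  then show ?thesis by simp
next
  case False
  then have "\<bar>c x1 y - c x0 y\<bar> / norm (x1 - x0) \<le> L"
    using c_lip_ge_diff_quotient[OF assms(2-4) False, of c] L by simp
  with False show ?thesis by (simp add: divide_le_eq)
qed

lemma c_chord_coincident_le:
  assumes "Y \<noteq> {}" and bound: "\<And>y. y \<in> Y \<Longrightarrow> c x0 y - c x y \<le> B"
  shows "c_chord c Y (x0, u) (x0, u) x \<le> u + B"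
proof -
  define S where "S = {- c x y + h |y h. y \<in> Y \<and> - c x0 y + h \<le> u}"
  have "c_chord c Y (x0, u) (x0, u) x = Sup S"
    unfolding c_chord_def S_def by simp
  also have "Sup S \<le> u + B"
  proof (rule cSup_least)
    obtain y where "y \<in> Y" using \<open>Y \<noteq> {}\<close> by blast
    then have "- c x y + (u + c x0 y) \<in> S" unfolding S_def by force
    then show "S \<noteq> {}" by blast
  next
    fix z
    assume "z \<in> S"
    then obtain y h where "z = - c x y + h" "y \<in> Y" "- c x0 y + h \<le> u"
      unfolding S_def by auto
    then show "z \<le> u + B" using bound[of y] by linarith
  qed
  finally show ?thesis .
qed

lemma alt_c_convex_diff_le:
  fixes c :: "'a::real_normed_vector \<Rightarrow> 'b::real_normed_vector \<Rightarrow> real"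
  assumes "alt_c_convex c X Y \<phi>" "Y \<noteq> {}" "x0 \<in> X" "x1 \<in> X" "c_lip c X Y = ereal L"
  shows "\<phi> x1 - \<phi> x0 \<le> L * norm (x1 - x0)"
proof -
  have bound: "c x0 y - c x1 y \<le> L * norm (x1 - x0)" if "y \<in> Y" for y
    using c_lip_abs_diff_le[OF assms(5) assms(3,4) that] by linarith
  have "c_chord c Y (x0, \<phi> x0) (x0, \<phi> x0) x1 \<le> \<phi> x0 + L * norm (x1 - x0)"
    using c_chord_coincident_le[of Y c x0 x1 "L * norm (x1 - x0)"] assms(2) bound by blast
  moreover have "\<phi> x1 \<le> c_chord c Y (x0, \<phi> x0) (x0, \<phi> x0) x1"
    using assms(1,3,4) unfolding alt_c_convex_def by blast
  ultimately show ?thesis by linarith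
qed

lemma alt_c_convex_lipschitz:
  fixes c :: "'a::real_normed_vector \<Rightarrow> 'b::real_normed_vector \<Rightarrow> real"
  assumes \<phi>: "alt_c_convex c X Y \<phi>" and "Y \<noteq> {}" and x: "x0 \<in> X" "x1 \<in> X"
  shows "ereal \<bar>\<phi> x1 - \<phi> x0\<bar> \<le> c_lip c X Y * ereal (norm (x1 - x0))"
proof (cases "x0 = x1")
  case True
  then show ?thesis by (simp add: zero_ereal_def[symmetric])
next
  case False
  obtain y where y: "y \<in> Y" using \<open>Y \<noteq> {}\<close> by blast
  show ?thesis
  proof (cases "c_lip c X Y")
    case (real L)
    have "\<phi> x1 - \<phi> x0 \<le> L * norm (x1 - x0)"
      using alt_c_convex_diff_le[OF \<phi> \<open>Y \<noteq> {}\<close> x real] .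
    moreover have "\<phi> x0 - \<phi> x1 \<le> L * norm (x1 - x0)"
      using alt_c_convex_diff_le[OF \<phi> \<open>Y \<noteq> {}\<close> x(2,1) real] by (simp add: norm_minus_commute)
    ultimately show ?thesis using real by simp
  next
    case PInf
    then show ?thesis using False by simp
  next
    case MInf
    then show ?thesis using c_lip_ge_diff_quotient[OF x y False, of c] by simp
  qed
qed

text \<open>Only the nonemptiness of Y enters the proof.\<close>

theorem lemma4p4:
  fixes X Y :: "(real^'n) set"
    and c :: "real^'n \<Rightarrow> real^'n \<Rightarrow> real"
    and Dx Dy :: "real^'n \<Rightarrow> real^'n \<Rightarrow> real^'n"
    and Dxy Dyx :: "real^'n \<Rightarrow> real^'n \<Rightarrow> real^'n^'n"
    and \<phi> :: "real^'n \<Rightarrow> real"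
  assumes X_cpt: "compact X" and Y_cpt: "compact Y"
    and X_int: "interior X \<noteq> {}" and Y_int: "interior Y \<noteq> {}"
    and c_cont: "continuous_on (X \<times> Y) (\<lambda>(x, y). c x y)"
    and Dx_deriv: "\<And>x y. x \<in> X \<Longrightarrow> y \<in> Y \<Longrightarrow>
                     ((\<lambda>x'. c x' y) has_derivative (\<lambda>h. Dx x y \<bullet> h)) (at x within X)"
    and Dy_deriv: "\<And>x y. x \<in> X \<Longrightarrow> y \<in> Y \<Longrightarrow>
                     ((\<lambda>y'. c x y') has_derivative (\<lambda>k. Dy x y \<bullet> k)) (at y within Y)"
    and Dx_cont: "continuous_on (X \<times> Y) (\<lambda>(x, y). Dx x y)"
    and Dy_cont: "continuous_on (X \<times> Y) (\<lambda>(x, y). Dy x y)"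
    and Dxy_deriv: "\<And>x y. x \<in> X \<Longrightarrow> y \<in> Y \<Longrightarrow>
                     ((\<lambda>y'. Dx x y') has_derivative (\<lambda>k. Dxy x y *v k)) (at y within Y)"
    and Dyx_deriv: "\<And>x y. x \<in> X \<Longrightarrow> y \<in> Y \<Longrightarrow>
                     ((\<lambda>x'. Dy x' y) has_derivative (\<lambda>h. Dyx x y *v h)) (at x within X)"
    and Dxy_cont: "continuous_on (X \<times> Y) (\<lambda>(x, y). Dxy x y)"
    and Dyx_cont: "continuous_on (X \<times> Y) (\<lambda>(x, y). Dyx x y)"
    and Dxy_sym: "\<And>x y. x \<in> X \<Longrightarrow> y \<in> Y \<Longrightarrow> Dxy x y = transpose (Dyx x y)"
    and twist_x: "\<And>x. x \<in> X \<Longrightarrow> inj_on (\<lambda>y. - Dx x y) Y"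
    and twist_y: "\<And>y. y \<in> Y \<Longrightarrow> inj_on (\<lambda>x. - Dy x y) X"
    and nondeg: "\<And>x y. x \<in> X \<Longrightarrow> y \<in> Y \<Longrightarrow> invertible (Dxy x y)"
    and conv_y: "\<And>y. y \<in> Y \<Longrightarrow> convex ((\<lambda>x. - Dy x y) ` X)"
    and conv_x: "\<And>x. x \<in> X \<Longrightarrow> convex ((\<lambda>y. - Dx x y) ` Y)"
    and phi: "alt_c_convex c X Y \<phi>"
  shows "\<forall>x0\<in>X. \<forall>x1\<in>X. ereal \<bar>\<phi> x1 - \<phi> x0\<bar> \<le> c_lip c X Y * ereal (norm (x1 - x0))"
proof -
  have "Y \<noteq> {}" using Y_int interior_subset by blast
  then show ?thesis using alt_c_convex_lipschitz[OF phi] by blast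
qed

end
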